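(* In the setting of the context: (a) If $\Pi^\rho_1 \ne \emptyset$, then the market admits $\rho$-arbitrage if and only if $\rho_1 \le 0$. (b) If $\Pi^\rho_1 = \emptyset$ and $\Pi^\rho_0 \ne \emptyset$, then the market admits $\rho$-arbitrage if and only if $\rho_1 < 0$. (c) If $\Pi^\rho_1 = \emptyset$ and $\Pi^\rho_0 = \emptyset$, then the market admits $\rho$-arbitrage.
   Context: Let $(\Omega,\mathcal{F},\mathbb{P})$ be a probability space. The market consists of a riskless asset with $S^0_0 = 1$, $S^0_1 = 1+r$, $r > -1$, and $d$ risky assets $S^1,\dots,S^d$ with constants $S^i_0 > 0$ and real-valued $\mathcal{F}$-measurable $S^i_1$. Returns: $R^i := (S^i_1 - S^i_0)/S^i_0$, $R=(R^1,\dots,R^d)$. Standing assumptions: nonredundancy (if $\theta\in\mathbb{R}^{1+d}$ and $\sum_{i=0}^d\theta^iS^i_t=0$ a.s. for $t\in\{0,1\}$ then $\theta=0$); $R^i\in L^1(\mathbb{P})$, $\mu^i:=\mathbb{E}[R^i]$; $\mu^i\neq r$ for some $i$. Portfolio $\pi\in\mathbb{R}^d$ has excess return $X_\pi:=\pi\cdot(R-r\mathbf{1})$; $\Pi_\nu := \{\pi : \mathbb{E}[X_\pi]=\nu\}$. $L$ is a Riesz space with $L^\infty\subset L\subset L^1$ containing all $X_\pi$, and $\rho:L\to(-\infty,\infty]$ is monotone, cash-invariant and positively homogeneous. $\rho_\nu:=\inf\{\rho(X_\pi):\pi\in\Pi_\nu\}\in[-\infty,\infty]$; $\Pi^\rho_\nu$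 is the set of $\pi\in\Pi_\nu$ with $\rho(X_\pi)<\infty$ and $\rho(X_\pi)\le\rho(X_{\pi'})$ for all $\pi'\in\Pi_\nu$. A portfolio $\pi$ is strictly $\rho$-preferred over $\pi'$ if $\mathbb{E}[X_\pi]\ge\mathbb{E}[X_{\pi'}]$ and $\rho(X_\pi)\le\rho(X_{\pi'})$ with at least one inequality strict. A portfolio $\pi$ is $\rho$-efficient if $\mathbb{E}[X_\pi]\ge0$ and no portfolio is strictly $\rho$-preferred over $\pi$. The market admits $\rho$-arbitrage if there are no $\rho$-efficient portfolios. *)

theory Defs
  imports "HOL-Probability.Probability"
begin

text \<open>Market model. Risky assets are indexed by a finite type 'd (so d = CARD('d) >= 1).
  S0 i > 0 initial prices, S1 i random final prices, r riskless rate.\<close>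

definition returns :: "('d \<Rightarrow> real) \<Rightarrow> ('d \<Rightarrow> 'a \<Rightarrow> real) \<Rightarrow> 'd \<Rightarrow> 'a \<Rightarrow> real" where
  "returns S0 S1 i \<omega> = (S1 i \<omega> - S0 i) / S0 i"

definition nonredundant ::
  "'a measure \<Rightarrow> real \<Rightarrow> ('d::finite \<Rightarrow> real) \<Rightarrow> ('d \<Rightarrow> 'a \<Rightarrow> real) \<Rightarrow> bool" where
  "nonredundant M r S0 S1 \<longleftrightarrow>
     (\<forall>(\<theta>0::real) (\<theta>::'d \<Rightarrow> real).
        (\<theta>0 * 1 + (\<Sum>i\<in>UNIV. \<theta> i * S0 i) = 0) \<and>
        (AE \<omega> in M. \<theta>0 * (1 + r) + (\<Sum>i\<in>UNIV. \<theta> i * S1 i \<omega>) = 0)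
        \<longrightarrow> \<theta>0 = 0 \<and> (\<forall>i. \<theta> i = 0))"

definition excess_return :: "real \<Rightarrow> ('d::finite \<Rightarrow> 'a \<Rightarrow> real) \<Rightarrow> ('d \<Rightarrow> real) \<Rightarrow> 'a \<Rightarrow> real" where
  "excess_return r R \<pi> \<omega> = (\<Sum>i\<in>UNIV. \<pi> i * (R i \<omega> - r))"

definition riesz_space_L :: "'a measure \<Rightarrow> ('a \<Rightarrow> real) set \<Rightarrow> bool" where
  "riesz_space_L M L \<longleftrightarrow>
     (\<forall>X\<in>L. integrable M X) \<and>
     (\<forall>X. X \<in> borel_measurable M \<and> (\<exists>C. AE \<omega> in M. \<bar>X \<omega>\<bar> \<le> C) \<longrightarrow> X \<in> L) \<and>
     (\<forall>X\<in>L. \<forall>Y\<in>L. (\<lambda>\<omega>. X \<omega> + Y \<omega>) \<in> L) \<and>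
     (\<forall>c::real. \<forall>X\<in>L. (\<lambda>\<omega>. c * X \<omega>) \<in> L) \<and>
     (\<forall>X\<in>L. \<forall>Y\<in>L. (\<lambda>\<omega>. max (X \<omega>) (Y \<omega>)) \<in> L)"

definition risk_functional :: "'a measure \<Rightarrow> ('a \<Rightarrow> real) set \<Rightarrow> (('a \<Rightarrow> real) \<Rightarrow> ereal) \<Rightarrow> bool" where
  "risk_functional M L \<rho> \<longleftrightarrow>
     (\<forall>X\<in>L. \<rho> X \<noteq> -\<infinity>) \<and>
     (\<forall>X\<in>L. \<forall>Y\<in>L. (AE \<omega> in M. X \<omega> \<le> Y \<omega>) \<longrightarrow> \<rho> Y \<le> \<rho> X) \<and>
     (\<forall>X\<in>L. \<forall>c::real. \<rho> (\<lambda>\<omega>. X \<omega> + c) = \<rho> X - ereal c) \<and>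
     (\<forall>X\<in>L. \<forall>t::real. t \<ge> 0 \<longrightarrow> \<rho> (\<lambda>\<omega>. t * X \<omega>) = ereal t * \<rho> X)"

definition Pi_nu :: "'a measure \<Rightarrow> real \<Rightarrow> ('d::finite \<Rightarrow> 'a \<Rightarrow> real) \<Rightarrow> real \<Rightarrow> ('d \<Rightarrow> real) set" where
  "Pi_nu M r R \<nu> = {\<pi>. integral\<^sup>L M (excess_return r R \<pi>) = \<nu>}"

definition rho_nu :: "'a measure \<Rightarrow> real \<Rightarrow> ('d::finite \<Rightarrow> 'a \<Rightarrow> real) \<Rightarrow> (('a \<Rightarrow> real) \<Rightarrow> ereal) \<Rightarrow> real \<Rightarrow> ereal" where
  "rho_nu M r R \<rho> \<nu> = (INF \<pi>\<in>Pi_nu M r R \<nu>. \<rho> (excess_return r R \<pi>))"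

definition Pi_rho :: "'a measure \<Rightarrow> real \<Rightarrow> ('d::finite \<Rightarrow> 'a \<Rightarrow> real) \<Rightarrow> (('a \<Rightarrow> real) \<Rightarrow> ereal) \<Rightarrow> real \<Rightarrow> ('d \<Rightarrow> real) set" where
  "Pi_rho M r R \<rho> \<nu> = {\<pi> \<in> Pi_nu M r R \<nu>. \<rho> (excess_return r R \<pi>) < \<infinity> \<and>
      (\<forall>\<pi>'\<in>Pi_nu M r R \<nu>. \<rho> (excess_return r R \<pi>) \<le> \<rho> (excess_return r R \<pi>'))}"

definition strictly_preferred :: "'a measure \<Rightarrow> real \<Rightarrow> ('d::finite \<Rightarrow> 'a \<Rightarrow> real) \<Rightarrow> (('a \<Rightarrow> real) \<Rightarrow> ereal) \<Rightarrow> ('d \<Rightarrow> real) \<Rightarrow> ('d \<Rightarrow> real) \<Rightarrow> bool" where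
  "strictly_preferred M r R \<rho> \<pi> \<pi>' \<longleftrightarrow>
     (let e = integral\<^sup>L M (excess_return r R \<pi>); e' = integral\<^sup>L M (excess_return r R \<pi>');
          p = \<rho> (excess_return r R \<pi>); p' = \<rho> (excess_return r R \<pi>')
      in e \<ge> e' \<and> p \<le> p' \<and> (e > e' \<or> p < p'))"

definition rho_efficient :: "'a measure \<Rightarrow> real \<Rightarrow> ('d::finite \<Rightarrow> 'a \<Rightarrow> real) \<Rightarrow> (('a \<Rightarrow> real) \<Rightarrow> ereal) \<Rightarrow> ('d \<Rightarrow> real) \<Rightarrow> bool" where
  "rho_efficient M r R \<rho> \<pi> \<longleftrightarrow>
     integral\<^sup>L M (excess_return r R \<pi>) \<ge> 0 \<and> \<not> (\<exists>\<pi>'. strictly_preferred M r R \<rho> \<pi>' \<pi>)"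

definition rho_arbitrage :: "'a measure \<Rightarrow> real \<Rightarrow> ('d::finite \<Rightarrow> 'a \<Rightarrow> real) \<Rightarrow> (('a \<Rightarrow> real) \<Rightarrow> ereal) \<Rightarrow> bool" where
  "rho_arbitrage M r R \<rho> \<longleftrightarrow> \<not> (\<exists>\<pi>. rho_efficient M r R \<rho> \<pi>)"

end

theory Submission
  imports Defs
begin

(* Only positive homogeneity of the mean and of \<rho> in the portfolio matters.
   Rescaling a portfolio of mean \<nu> > 0 to mean 1 shows that \<nu> \<rho>_1 is the least risk
   attainable at mean \<nu>, and doubling a portfolio of negative risk strictly improves it, so an
   efficient portfolio has nonnegative risk. If \<rho>_1 > 0 is attained, the mean-1 optimum is
   efficient; if \<rho>_1 \<le> 0 is attained, a large multiple of the optimum beats every candidate.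
   If \<rho>_1 is not attained, no portfolio of positive mean is efficient, because some portfolio
   of mean 1 beats its rescaling; then only mean 0 is left, where the zero portfolio is efficient
   exactly when no portfolio of mean 0 or mean 1 has negative risk. *)

locale homogeneous_mean_risk =
  fixes scale :: "real \<Rightarrow> 'p \<Rightarrow> 'p" and mean :: "'p \<Rightarrow> real" and risk :: "'p \<Rightarrow> ereal"
  assumes mean_scale: "t \<ge> 0 \<Longrightarrow> mean (scale t x) = t * mean x"
    and risk_scale: "t \<ge> 0 \<Longrightarrow> risk (scale t x) = ereal t * risk x"
    and risk_not_MInfty: "risk x \<noteq> -\<infinity>"
begin

definition preferred :: "'p \<Rightarrow> 'p \<Rightarrow> bool" where
  "preferred y x \<longleftrightarrow> mean x \<le> mean y \<and> risk y \<le> risk x \<and> (mean x < mean y \<or> risk y < risk x)"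

definition efficient :: "'p \<Rightarrow> bool" where
  "efficient x \<longleftrightarrow> 0 \<le> mean x \<and> \<not> (\<exists>y. preferred y x)"

definition arbitrage :: bool where
  "arbitrage \<longleftrightarrow> \<not> (\<exists>x. efficient x)"

definition optimal :: "real \<Rightarrow> 'p set" where
  "optimal \<nu> = {x. mean x = \<nu> \<and> risk x < \<infinity> \<and> (\<forall>y. mean y = \<nu> \<longrightarrow> risk x \<le> risk y)}"

definition min_risk :: "real \<Rightarrow> ereal" where
  "min_risk \<nu> = (INF x\<in>{x. mean x = \<nu>}. risk x)"

lemma mean_scale_0 [simp]: "mean (scale 0 x) = 0"
  by (simp add: mean_scale)

lemma risk_scale_0 [simp]: "risk (scale 0 x) = 0"
  by (simp add: risk_scale zero_ereal_def[symmetric])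

lemma risk_finite_cases:
  obtains c where "risk x = ereal c" | "risk x = \<infinity>"
  using risk_not_MInfty[of x] by (cases "risk x") auto

lemma risk_scale_ereal: "risk x = ereal c \<Longrightarrow> t \<ge> 0 \<Longrightarrow> risk (scale t x) = ereal (t * c)"
  by (simp add: risk_scale)

lemma mean_normalize: "0 < mean x \<Longrightarrow> mean (scale (1 / mean x) x) = 1"
  by (simp add: mean_scale)

lemma risk_normalize:
  assumes "0 < mean x"
  shows "ereal (mean x) * risk (scale (1 / mean x) x) = risk x"
proof -
  have "ereal (mean x) * risk (scale (1 / mean x) x) = ereal (mean x * (1 / mean x)) * risk x"
    using assms by (simp add: risk_scale mult.assoc[symmetric])
  then show ?thesis
    using assms by simp
qed

lemma min_risk_le: "mean x = \<nu> \<Longrightarrow> min_risk \<nu> \<le> risk x"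
  unfolding min_risk_def by (auto intro: INF_lower)

lemma min_risk_optimal: "x \<in> optimal \<nu> \<Longrightarrow> min_risk \<nu> = risk x"
  unfolding min_risk_def optimal_def by (auto intro: INF_eqI)

lemma scaled_min_risk_le_risk:
  assumes "0 < mean x"
  shows "ereal (mean x) * min_risk 1 \<le> risk x"
proof -
  have "ereal (mean x) * min_risk 1 \<le> ereal (mean x) * risk (scale (1 / mean x) x)"
    using assms by (intro ereal_mult_left_mono min_risk_le) (simp_all add: mean_normalize)
  then show ?thesis
    using risk_normalize[OF assms] by simp
qed

lemma preferred_double_if_risk_neg:
  assumes "0 \<le> mean x" and "risk x < 0"
  shows "preferred (scale 2 x) x"
proof -
  obtain c where "risk x = ereal c" "c < 0"
    using assms(2) by (cases x rule: risk_finite_cases) auto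
  then show ?thesis
    using assms(1) by (simp add: preferred_def mean_scale risk_scale_ereal)
qed

lemma preferred_double_if_risk_infinite:
  "0 < mean x \<Longrightarrow> risk x = \<infinity> \<Longrightarrow> preferred (scale 2 x) x"
  by (simp add: preferred_def mean_scale)

lemma efficient_risk_nonneg:
  assumes "efficient x"
  shows "0 \<le> risk x"
proof (rule ccontr)
  assume "\<not> 0 \<le> risk x"
  then have "preferred (scale 2 x) x"
    using assms by (intro preferred_double_if_risk_neg) (simp_all add: efficient_def)
  then show False
    using assms unfolding efficient_def by blast
qed

lemma not_efficient_if_better_mean_negative_risk:
  assumes "mean x \<le> mean y" and "risk y < 0"
  shows "\<not> efficient x"
proof
  assume eff: "efficient x"
  then have "risk y < risk x"
    using assms(2) efficient_risk_nonneg by (blast intro: less_le_trans)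
  then have "preferred y x"
    using assms(1) by (simp add: preferred_def)
  then show False
    using eff unfolding efficient_def by blast
qed

lemma optimal_zero_risk_nonneg:
  assumes "optimal 0 \<noteq> {}" and "mean y = 0"
  shows "0 \<le> risk y"
proof -
  obtain x where x: "x \<in> optimal 0"
    using assms(1) by blast
  have "0 \<le> risk x"
  proof (rule ccontr)
    assume "\<not> 0 \<le> risk x"
    then have "preferred (scale 2 x) x"
      using x by (intro preferred_double_if_risk_neg) (auto simp: optimal_def)
    moreover have "risk x \<le> risk (scale 2 x)"
      using x by (auto simp: optimal_def mean_scale)
    ultimately show False
      using x by (fastforce simp: preferred_def optimal_def mean_scale)
  qed
  then show ?thesis
    using x assms(2) by (auto simp: optimal_def)
qed

text \<open>Without a mean-1 optimum, the rescaling of a portfolio of positive mean to mean 1 is beaten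
  by some portfolio of mean 1, and scaling that one back beats the original.\<close>
lemma not_efficient_if_no_optimal:
  assumes "optimal 1 = {}" and "0 < mean x"
  shows "\<not> efficient x"
proof (cases x rule: risk_finite_cases)
  case (1 c)
  define y where "y = scale (1 / mean x) x"
  have y: "mean y = 1" "risk y = ereal (c / mean x)"
    using assms(2) 1 by (simp_all add: y_def mean_normalize risk_scale_ereal)
  then obtain z where z: "mean z = 1" "risk z < risk y"
    using assms(1) unfolding optimal_def by (auto simp: not_le)
  then obtain d where d: "risk z = ereal d" "d < c / mean x"
    using y(2) by (cases z rule: risk_finite_cases) auto
  have "preferred (scale (mean x) z) x"
    using assms(2) z(1) d 1 by (simp add: preferred_def mean_scale risk_scale_ereal field_simps)
  then show ?thesis
    unfolding efficient_def by blast
next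
  case 2
  then show ?thesis
    using preferred_double_if_risk_infinite[OF assms(2)] unfolding efficient_def by blast
qed

lemma optimal_efficient_if_min_risk_pos:
  assumes x: "x \<in> optimal 1" and pos: "0 < min_risk 1"
  shows "efficient x"
  unfolding efficient_def
proof (intro conjI notI)
  show "0 \<le> mean x"
    using x by (simp add: optimal_def)
  obtain c where c: "risk x = ereal c" "min_risk 1 = ereal c"
    using x min_risk_optimal[OF x] by (cases x rule: risk_finite_cases) (auto simp: optimal_def)
  assume "\<exists>y. preferred y x"
  then obtain y where y: "preferred y x" ..
  then have y_le: "1 \<le> mean y" "risk y \<le> ereal c"
    using x c unfolding preferred_def optimal_def by auto
  have "ereal (mean y * c) \<le> risk y"
    using scaled_min_risk_le_risk[of y] c y_le(1) by simp
  then have "mean y * c \<le> c"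
    using y_le(2) by (meson ereal_less_eq(3) order_trans)
  then have "mean y = 1"
    using y_le(1) pos c(2) by (simp add: mult_le_cancel_right2)
  then show False
    using x y c unfolding preferred_def optimal_def by auto
qed

lemma no_efficient_if_min_risk_nonpos:
  assumes x1: "x1 \<in> optimal 1" and nonpos: "min_risk 1 \<le> 0"
  shows "\<not> efficient x"
proof
  assume eff: "efficient x"
  obtain c where c: "risk x1 = ereal c" "c \<le> 0"
    using x1 nonpos min_risk_optimal[OF x1]
    by (cases x1 rule: risk_finite_cases) (auto simp: optimal_def)
  have "0 \<le> mean x"
    using eff by (simp add: efficient_def)
  have "ereal (mean x * c) \<le> risk x"
  proof (cases "mean x = 0")
    case True
    then show ?thesis
      using efficient_risk_nonneg[OF eff] by (simp add: zero_ereal_def)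
  next
    case False
    then show ?thesis
      using scaled_min_risk_le_risk[of x] min_risk_optimal[OF x1] c \<open>0 \<le> mean x\<close> by simp
  qed
  moreover have "(mean x + 1) * c \<le> mean x * c"
    using c(2) by (simp add: algebra_simps)
  ultimately have "ereal ((mean x + 1) * c) \<le> risk x"
    by (meson ereal_less_eq(3) order_trans)
  then have "preferred (scale (mean x + 1) x1) x"
    using x1 c \<open>0 \<le> mean x\<close> by (auto simp: preferred_def optimal_def mean_scale risk_scale_ereal)
  then show False
    using eff unfolding efficient_def by blast
qed

theorem arbitrage_iff_min_risk_nonpos:
  assumes "optimal 1 \<noteq> {}"
  shows "arbitrage \<longleftrightarrow> min_risk 1 \<le> 0"
proof -
  obtain x1 where "x1 \<in> optimal 1"
    using assms by blast
  then show ?thesis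
    unfolding arbitrage_def
    using optimal_efficient_if_min_risk_pos no_efficient_if_min_risk_nonpos not_le by blast
qed

text \<open>When the zero portfolio is dominated by some \<open>y\<close> of positive mean, \<open>y\<close> has risk 0,
  so its rescaling to mean 1 would be an optimum at mean 1.\<close>
lemma zero_efficient_if_min_risk_nonneg:
  assumes no1: "optimal 1 = {}" and ne0: "optimal 0 \<noteq> {}" and nonneg: "0 \<le> min_risk 1"
  shows "efficient (scale 0 x)"
  unfolding efficient_def
proof (intro conjI notI)
  show "0 \<le> mean (scale 0 x)"
    by simp
  assume "\<exists>y. preferred y (scale 0 x)"
  then obtain y where y: "0 \<le> mean y" "risk y \<le> 0" "0 < mean y \<or> risk y < 0"
    unfolding preferred_def by auto
  show False
  proof (cases "mean y = 0")
    case True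
    then show False
      using optimal_zero_risk_nonneg[OF ne0] y by fastforce
  next
    case False
    then have pos: "0 < mean y"
      using y(1) by simp
    have "0 \<le> ereal (mean y) * min_risk 1"
      using pos nonneg by simp
    then have "risk y = 0"
      using scaled_min_risk_le_risk[OF pos] y(2) by simp
    then have "risk (scale (1 / mean y) y) = 0"
      using pos by (simp add: risk_scale)
    then have "scale (1 / mean y) y \<in> optimal 1"
      using pos by (auto simp: optimal_def mean_normalize intro: order_trans[OF nonneg min_risk_le])
    then show False
      using no1 by blast
  qed
qed

lemma arbitrage_if_no_optimal_negative_risk:
  assumes no1: "optimal 1 = {}" and "0 \<le> mean y" and "risk y < 0"
  shows "arbitrage"
proof -
  have "\<not> efficient x" for x
  proof (cases "mean x = 0")
    case True
    then show ?thesis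
      using assms by (intro not_efficient_if_better_mean_negative_risk[of x y]) simp_all
  next
    case False
    then show ?thesis
      using not_efficient_if_no_optimal[OF no1] efficient_def by force
  qed
  then show ?thesis
    unfolding arbitrage_def by blast
qed

theorem arbitrage_iff_min_risk_neg:
  assumes "optimal 1 = {}" and "optimal 0 \<noteq> {}"
  shows "arbitrage \<longleftrightarrow> min_risk 1 < 0"
proof
  assume "arbitrage"
  then show "min_risk 1 < 0"
    using zero_efficient_if_min_risk_nonneg[OF assms] unfolding arbitrage_def by (meson not_le)
next
  assume "min_risk 1 < 0"
  then obtain y where "mean y = 1" "risk y < 0"
    unfolding min_risk_def by (auto simp: INF_less_iff)
  then show "arbitrage"
    by (intro arbitrage_if_no_optimal_negative_risk[OF assms(1), of y]) simp_all
qed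

theorem arbitrage_if_no_optimal:
  assumes "optimal 1 = {}" and "optimal 0 = {}"
  shows "arbitrage"
proof -
  fix x
  have "scale 0 x \<notin> optimal 0"
    using assms(2) by blast
  then obtain y where "mean y = 0" "risk y < 0"
    by (auto simp: optimal_def not_le)
  then show ?thesis
    by (intro arbitrage_if_no_optimal_negative_risk[OF assms(1), of y]) simp_all
qed

end

lemma excess_return_scale:
  "excess_return r R (\<lambda>i. t * \<pi> i) = (\<lambda>\<omega>. t * excess_return r R \<pi> \<omega>)"
  unfolding excess_return_def by (simp add: sum_distrib_left mult.assoc)

theorem theorem3p20:
  fixes M :: "'a measure" and r :: real
    and S0 :: "'d::finite \<Rightarrow> real" and S1 :: "'d \<Rightarrow> 'a \<Rightarrow> real"
    and L :: "('a \<Rightarrow> real) set" and \<rho> :: "('a \<Rightarrow> real) \<Rightarrow> ereal"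
  defines "R \<equiv> returns S0 S1"
  assumes "prob_space M"
    and "r > -1"
    and "\<forall>i. S0 i > 0"
    and "\<forall>i. S1 i \<in> borel_measurable M"
    and "nonredundant M r S0 S1"
    and "\<forall>i. integrable M (R i)"
    and "\<exists>i. integral\<^sup>L M (R i) \<noteq> r"
    and "riesz_space_L M L"
    and "\<forall>\<pi>. excess_return r R \<pi> \<in> L"
    and "risk_functional M L \<rho>"
  shows "(Pi_rho M r R \<rho> 1 \<noteq> {} \<longrightarrow>
            (rho_arbitrage M r R \<rho> \<longleftrightarrow> rho_nu M r R \<rho> 1 \<le> 0))
       \<and> (Pi_rho M r R \<rho> 1 = {} \<and> Pi_rho M r R \<rho> 0 \<noteq> {} \<longrightarrow>
            (rho_arbitrage M r R \<rho> \<longleftrightarrow> rho_nu M r R \<rho> 1 < 0))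
       \<and> (Pi_rho M r R \<rho> 1 = {} \<and> Pi_rho M r R \<rho> 0 = {} \<longrightarrow>
            rho_arbitrage M r R \<rho>)"
proof -
  interpret homogeneous_mean_risk "\<lambda>t \<pi> i. t * \<pi> i"
    "\<lambda>\<pi>. integral\<^sup>L M (excess_return r R \<pi>)" "\<lambda>\<pi>. \<rho> (excess_return r R \<pi>)"
    using \<open>risk_functional M L \<rho>\<close> \<open>\<forall>\<pi>. excess_return r R \<pi> \<in> L\<close>
    by unfold_locales (auto simp: excess_return_scale risk_functional_def)
  have optimal_eq: "Pi_rho M r R \<rho> \<nu> = optimal \<nu>" for \<nu>
    unfolding Pi_rho_def Pi_nu_def optimal_def by auto
  have min_risk_eq: "rho_nu M r R \<rho> \<nu> = min_risk \<nu>" for \<nu>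
    unfolding rho_nu_def Pi_nu_def min_risk_def ..
  have arbitrage_eq: "rho_arbitrage M r R \<rho> \<longleftrightarrow> arbitrage"
    unfolding rho_arbitrage_def rho_efficient_def strictly_preferred_def Let_def
      arbitrage_def efficient_def preferred_def ..
  show ?thesis
    unfolding optimal_eq min_risk_eq arbitrage_eq
    by (simp add: arbitrage_iff_min_risk_nonpos arbitrage_iff_min_risk_neg arbitrage_if_no_optimal)
qed

end
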